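(* Let $X$ be a topological space and $f\colon X\to X$ a homeomorphism such that the $\mathbb Z$-action $n\cdot x=f^n(x)$ is cocompactly expansive. Then for every integer $n\neq 0$, the homeomorphism $f^n$ (i.e. the $\mathbb Z$-action $m\cdot x=f^{nm}(x)$) is cocompactly expansive.
   Context: For a family $\mathcal U$ of subsets of $X$ and $A\subseteq X$, write $A\prec\mathcal U$ if $A\subseteq U$ for some $U\in\mathcal U$. An action of a group $G$ on $X$ is cocompactly expansive if there exist a finite open cover $\mathcal U$ of $X$ and a compact set $K\subseteq X$ such that (1) $G\cdot K=X$, and (2) whenever $x,y\in X$ satisfy $\{g\cdot x,g\cdot y\}\prec\mathcal U\cup\{X\setminus K\}$ for every $g\in G$, then $x=y$. *)

theory Defs
  imports "HOL-Analysis.Analysis"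
begin

definition subord :: "'a set \<Rightarrow> 'a set set \<Rightarrow> bool" where
  "subord A \<U> \<longleftrightarrow> (\<exists>U\<in>\<U>. A \<subseteq> U)"

definition cocompactly_expansive :: "'g set \<Rightarrow> ('g \<Rightarrow> 'a::topological_space \<Rightarrow> 'a) \<Rightarrow> bool" where
  "cocompactly_expansive G act \<longleftrightarrow>
     (\<exists>\<U> K. finite \<U> \<and> (\<forall>U\<in>\<U>. open U) \<and> \<Union>\<U> = UNIV \<and> compact K \<and>
        (\<Union>g\<in>G. act g ` K) = UNIV \<and>
        (\<forall>x y. (\<forall>g\<in>G. subord {act g x, act g y} (\<U> \<union> {UNIV - K})) \<longrightarrow> x = y))"

definition zpow :: "('a \<Rightarrow> 'a) \<Rightarrow> ('a \<Rightarrow> 'a) \<Rightarrow> int \<Rightarrow> 'a \<Rightarrow> 'a" where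
  "zpow f g n = (if 0 \<le> n then f ^^ nat n else g ^^ nat (- n))"

end

theory Submission
  imports Defs
begin

text \<open>Let \<open>\<U>\<close> and \<open>K\<close> witness cocompact expansiveness of \<open>f\<close> and let \<open>N = \<bar>n\<bar>\<close>.
  Every \<open>f\<^sup>k\<close> factors as \<open>f\<^sup>r \<circ> f\<^sup>N\<^sup>q\<close> with \<open>0 \<le> r < N\<close>, so \<open>f\<^sup>n\<close> is witnessed by
  the join of the covers \<open>f\<^sup>-\<^sup>r \<U>\<close> and the compact set \<open>\<Union>r<N. f\<^sup>-\<^sup>r K\<close>: a pair of
  \<open>f\<^sup>n\<close>-orbits that is small for these at time \<open>q\<close> is small for \<open>\<U>\<close> and \<open>K\<close> at every
  time \<open>Nq + r\<close>. Only the finiteness of \<open>\<int>/n\<int>\<close> matters: the argument works for any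
  action factoring through finitely many homeomorphisms.\<close>

context
  fixes f g :: "'a \<Rightarrow> 'a"
  assumes f_g: "\<And>x. f (g x) = x" and g_f: "\<And>x. g (f x) = x"
begin

lemma zpow_plus_one: "zpow f g (a + 1) = f \<circ> zpow f g a"
proof (cases "0 \<le> a")
  case True
  then have "nat (a + 1) = Suc (nat a)" by simp
  with True show ?thesis by (simp add: zpow_def)
next
  case False
  define j where "j = nat (- a - 1)"
  with False have a: "a = - int (Suc j)" by simp
  then have "nat (- a) = Suc j" by simp
  with a have "zpow f g a = g \<circ> g ^^ j" and "zpow f g (a + 1) = g ^^ j"
    by (auto simp: zpow_def)
  then show ?thesis by (simp add: comp_def f_g)
qed

lemma zpow_minus_one: "zpow f g (a - 1) = g \<circ> zpow f g a"
  using zpow_plus_one[of "a - 1"] by (simp add: fun_eq_iff g_f)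

lemma zpow_add: "zpow f g (a + b) = zpow f g a \<circ> zpow f g b"
proof (induction a rule: int_induct[where k = 0])
  case base
  show ?case by (simp add: zpow_def)
next
  case (step1 i)
  have "zpow f g (i + 1 + b) = zpow f g (i + b + 1)" by (simp only: ac_simps)
  also have "\<dots> = f \<circ> (zpow f g i \<circ> zpow f g b)" by (simp only: zpow_plus_one step1)
  finally show ?case by (simp only: zpow_plus_one comp_assoc)
next
  case (step2 i)
  have "zpow f g (i - 1 + b) = zpow f g (i + b - 1)" by (simp only: algebra_simps)
  also have "\<dots> = g \<circ> (zpow f g i \<circ> zpow f g b)" by (simp only: zpow_minus_one step2)
  finally show ?case by (simp only: zpow_minus_one comp_assoc)
qed

end

lemma zpow_of_nat: "zpow f g (int i) = f ^^ i"
  by (simp add: zpow_def)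

lemma zpow_neg_of_nat: "zpow f g (- int i) = g ^^ i"
  by (cases "i = 0") (auto simp: zpow_def)

lemma zpow_eq_funpow_comp_zpow_mult:
  assumes "\<And>x. f (g x) = x" "\<And>x. g (f x) = x" "0 < N"
  shows "zpow f g k = f ^^ nat (k mod N) \<circ> zpow f g (N * (k div N))"
proof -
  have "k = int (nat (k mod N)) + N * (k div N)" using \<open>0 < N\<close> by simp
  then show ?thesis by (metis assms(1,2) zpow_add zpow_of_nat)
qed

lemma zpow_eq_zpow_mult_comp_funpow:
  assumes "\<And>x. f (g x) = x" "\<And>x. g (f x) = x" "0 < N"
  shows "zpow f g k = zpow f g (N * - (- k div N)) \<circ> g ^^ nat (- k mod N)"
proof -
  have "- k = N * (- k div N) + - k mod N" by simp
  moreover have "int (nat (- k mod N)) = - k mod N" using \<open>0 < N\<close> by simp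
  ultimately have "k = N * - (- k div N) + - int (nat (- k mod N))" by linarith
  then show ?thesis by (metis assms(1,2) zpow_add zpow_neg_of_nat)
qed

lemma homeomorphism_funpow:
  assumes "homeomorphism S S f g"
  shows "homeomorphism S S (f ^^ i) (g ^^ i)"
proof (induction i)
  case 0
  then show ?case by (simp add: id_def homeomorphism_ident)
next
  case (Suc i)
  have "f ^^ Suc i = f \<circ> f ^^ i" "g ^^ Suc i = g ^^ i \<circ> g"
    by (simp, rule funpow_Suc_right)
  then show ?case using homeomorphism_compose[OF Suc assms] by (simp only:)
qed

definition vimage_join :: "('r \<Rightarrow> 'a \<Rightarrow> 'b) \<Rightarrow> 'r set \<Rightarrow> 'b set set \<Rightarrow> 'a set set" where
  "vimage_join \<rho> R \<U> = (\<lambda>U. \<Inter>r\<in>R. \<rho> r -` U r) ` (R \<rightarrow>\<^sub>E \<U>)"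

lemma finite_vimage_join: "finite R \<Longrightarrow> finite \<U> \<Longrightarrow> finite (vimage_join \<rho> R \<U>)"
  by (simp add: vimage_join_def finite_PiE)

lemma open_vimage_join:
  assumes "finite R" "\<And>r. r \<in> R \<Longrightarrow> continuous_on UNIV (\<rho> r)" "\<forall>U\<in>\<U>. open U"
    and "V \<in> vimage_join \<rho> R \<U>"
  shows "open V"
proof -
  obtain U where U: "U \<in> R \<rightarrow>\<^sub>E \<U>" and V: "V = (\<Inter>r\<in>R. \<rho> r -` U r)"
    using assms(4) by (auto simp: vimage_join_def)
  have "open (\<rho> r -` U r)" if "r \<in> R" for r
    using that U assms(2,3) continuous_on_open_vimage[of UNIV "\<rho> r"] by auto
  then show ?thesis unfolding V using \<open>finite R\<close> by (simp add: open_INT)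
qed

lemma Union_vimage_join:
  assumes "\<Union>\<U> = UNIV"
  shows "\<Union>(vimage_join \<rho> R \<U>) = UNIV"
proof -
  have "x \<in> \<Union>(vimage_join \<rho> R \<U>)" for x
  proof -
    have "\<exists>U\<in>\<U>. \<rho> r x \<in> U" for r using assms by blast
    then obtain U where U: "\<And>r. U r \<in> \<U> \<and> \<rho> r x \<in> U r" by metis
    then have "restrict U R \<in> R \<rightarrow>\<^sub>E \<U>" and "x \<in> (\<Inter>r\<in>R. \<rho> r -` restrict U R r)"
      by auto
    moreover from this(1) have "(\<Inter>r\<in>R. \<rho> r -` restrict U R r) \<in> vimage_join \<rho> R \<U>"
      unfolding vimage_join_def by (rule imageI)
    ultimately show ?thesis by blast
  qed
  then show ?thesis by blast
qed

lemma subord_vimage_join: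
  assumes "subord A (vimage_join \<rho> R \<U> \<union> {UNIV - (\<Union>r\<in>R. \<sigma> r ` K)})" "r \<in> R"
    and "\<And>x. \<sigma> r (\<rho> r x) = x"
  shows "subord (\<rho> r ` A) (\<U> \<union> {UNIV - K})"
proof -
  obtain V where "A \<subseteq> V" and V: "V \<in> vimage_join \<rho> R \<U> \<or> V = UNIV - (\<Union>r\<in>R. \<sigma> r ` K)"
    using assms(1) by (auto simp: subord_def)
  from V show ?thesis
  proof
    assume "V \<in> vimage_join \<rho> R \<U>"
    then obtain U where "U \<in> R \<rightarrow>\<^sub>E \<U>" "V = (\<Inter>r\<in>R. \<rho> r -` U r)"
      by (auto simp: vimage_join_def)
    with \<open>A \<subseteq> V\<close> \<open>r \<in> R\<close> have "\<rho> r ` A \<subseteq> U r" "U r \<in> \<U>" by auto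
    then show ?thesis by (auto simp: subord_def)
  next
    assume V: "V = UNIV - (\<Union>r\<in>R. \<sigma> r ` K)"
    have "\<rho> r a \<notin> K" if "a \<in> A" for a
    proof
      assume "\<rho> r a \<in> K"
      then have "a \<in> \<sigma> r ` K" by (metis assms(3) imageI)
      with \<open>a \<in> A\<close> \<open>A \<subseteq> V\<close> \<open>r \<in> R\<close> show False by (auto simp: V)
    qed
    then show ?thesis by (auto simp: subord_def)
  qed
qed

text \<open>For a finite-index subgroup \<open>H\<close> of a group \<open>G\<close> acting by homeomorphisms, \<open>R\<close> is a
  set of coset representatives, with \<open>g = r h = h' r'\<^sup>-\<^sup>1\<close>.\<close>

lemma cocompactly_expansive_finite_factorization:
  fixes act :: "'g \<Rightarrow> 'a::topological_space \<Rightarrow> 'a" and act' :: "'h \<Rightarrow> 'a \<Rightarrow> 'a"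
  assumes "cocompactly_expansive G act" and "finite R"
    and homeo: "\<And>r. r \<in> R \<Longrightarrow> homeomorphism UNIV UNIV (\<rho> r) (\<sigma> r)"
    and left_factor: "\<And>g. g \<in> G \<Longrightarrow> \<exists>h\<in>H. \<exists>r\<in>R. act g = \<rho> r \<circ> act' h"
    and right_factor: "\<And>g. g \<in> G \<Longrightarrow> \<exists>h\<in>H. \<exists>r\<in>R. act g = act' h \<circ> \<sigma> r"
  shows "cocompactly_expansive H act'"
proof -
  obtain \<U> K where \<U>: "finite \<U>" "\<forall>U\<in>\<U>. open U" "\<Union>\<U> = UNIV" and "compact K"
    and cover: "(\<Union>g\<in>G. act g ` K) = UNIV"
    and expansive: "\<And>x y. \<forall>g\<in>G. subord {act g x, act g y} (\<U> \<union> {UNIV - K}) \<Longrightarrow> x = y"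
    using assms(1) unfolding cocompactly_expansive_def by (elim exE conjE) (rule that, auto)
  let ?K = "\<Union>r\<in>R. \<sigma> r ` K"
  have "compact (\<sigma> r ` K)" if "r \<in> R" for r
    using homeomorphism_cont2[OF homeo[OF that]] \<open>compact K\<close>
    by (blast intro: compact_continuous_image continuous_on_subset)
  with \<open>finite R\<close> have "compact ?K" by (rule compact_UN)
  moreover have "(\<Union>h\<in>H. act' h ` ?K) = UNIV"
  proof -
    have "x \<in> (\<Union>h\<in>H. act' h ` ?K)" for x
    proof -
      obtain g z where "g \<in> G" "z \<in> K" "x = act g z" using cover by blast
      moreover obtain h r where "h \<in> H" "r \<in> R" "act g = act' h \<circ> \<sigma> r"
        using right_factor[OF \<open>g \<in> G\<close>] by blast
      ultimately show ?thesis by auto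
    qed
    then show ?thesis by blast
  qed
  moreover have "x = y"
    if "\<forall>h\<in>H. subord {act' h x, act' h y} (vimage_join \<rho> R \<U> \<union> {UNIV - ?K})" for x y
  proof (rule expansive, intro ballI)
    fix g assume "g \<in> G"
    then obtain h r where "h \<in> H" "r \<in> R" and g: "act g = \<rho> r \<circ> act' h"
      using left_factor by blast
    have "\<And>p. \<sigma> r (\<rho> r p) = p" using homeo[OF \<open>r \<in> R\<close>] by (simp add: homeomorphism_apply1)
    with that \<open>h \<in> H\<close> \<open>r \<in> R\<close> have "subord (\<rho> r ` {act' h x, act' h y}) (\<U> \<union> {UNIV - K})"
      by (intro subord_vimage_join) auto
    then show "subord {act g x, act g y} (\<U> \<union> {UNIV - K})" by (simp add: g)
  qed
  moreover have "finite (vimage_join \<rho> R \<U>)" using \<open>finite R\<close> \<U>(1) by (rule finite_vimage_join)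
  moreover have "\<forall>V\<in>vimage_join \<rho> R \<U>. open V"
    using \<open>finite R\<close> homeomorphism_cont1[OF homeo] \<U>(2) by (blast intro: open_vimage_join)
  moreover have "\<Union>(vimage_join \<rho> R \<U>) = UNIV" using \<U>(3) by (rule Union_vimage_join)
  ultimately show ?thesis
    unfolding cocompactly_expansive_def by (intro exI[of _ "vimage_join \<rho> R \<U>"] exI[of _ ?K]) blast
qed

theorem mainTheorem3:
  fixes f g :: "'a::topological_space \<Rightarrow> 'a" and n :: int
  assumes "homeomorphism UNIV UNIV f g"
    and "cocompactly_expansive (UNIV :: int set) (\<lambda>m x. zpow f g m x)"
    and "n \<noteq> 0"
  shows "cocompactly_expansive (UNIV :: int set) (\<lambda>m x. zpow f g (n * m) x)"
proof -
  have f_g: "\<And>x. f (g x) = x" and g_f: "\<And>x. g (f x) = x"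
    using assms(1) by (simp_all add: homeomorphism_apply1 homeomorphism_apply2)
  define N where "N = \<bar>n\<bar>"
  have "0 < N" using assms(3) by (simp add: N_def)
  have "N = n * sgn n" by (simp add: N_def abs_if sgn_if)
  then have N_mult: "zpow f g (N * q) = zpow f g (n * (sgn n * q))" for q
    by (simp add: mult.assoc)
  show ?thesis
  proof (rule cocompactly_expansive_finite_factorization[OF assms(2), where R = "{..<nat N}"])
    show "homeomorphism UNIV UNIV (f ^^ r) (g ^^ r)" for r
      using assms(1) by (rule homeomorphism_funpow)
    show "\<exists>m\<in>UNIV. \<exists>r\<in>{..<nat N}. zpow f g k = f ^^ r \<circ> zpow f g (n * m)" for k
    proof (intro bexI)
      show "zpow f g k = f ^^ nat (k mod N) \<circ> zpow f g (n * (sgn n * (k div N)))"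
        unfolding N_mult[symmetric] by (rule zpow_eq_funpow_comp_zpow_mult[OF f_g g_f \<open>0 < N\<close>])
    qed (use \<open>0 < N\<close> in \<open>simp_all add: nat_less_iff\<close>)
    show "\<exists>m\<in>UNIV. \<exists>r\<in>{..<nat N}. zpow f g k = zpow f g (n * m) \<circ> g ^^ r" for k
    proof (intro bexI)
      show "zpow f g k = zpow f g (n * (sgn n * - (- k div N))) \<circ> g ^^ nat (- k mod N)"
        unfolding N_mult[symmetric] by (rule zpow_eq_zpow_mult_comp_funpow[OF f_g g_f \<open>0 < N\<close>])
    qed (use \<open>0 < N\<close> in \<open>simp_all add: nat_less_iff\<close>)
  qed simp
qed

end
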